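(* Let $L\ge1$ and let $\beta=x_1^{a_1}x_2^{a_2}\cdots x_1^{a_{2L-1}}x_2^{a_{2L}}\in\mathcal{B}_3$ with total degree $D=\sum_{i=1}^{2L}a_i$. (a) If $a_i\ge1$ for all $i$, then $\deg V_3(\beta)\le 3D-2L$. (b) If $a_i\ge2$ for all $i$ and $L\le4$, then $\deg V_3(\beta)=3D-2L$ and the leading coefficient of $V_3(\beta)$ is $1$.
   Context: $\mathcal{B}_3$ is the 3-strand braid group with standard Artin generators $x_1,x_2$; $V_3(\beta)$ is the Jones polynomial of the closure $\widehat\beta$, normalized by $V(\text{unknot})=1$ and $q^{-1}V_{L_+}-qV_{L_-}=(q^{1/2}-q^{-1/2})V_{L_0}$, in the variable $s=q^{-1/2}$ (a Laurent polynomial in $s$). Conventions: closures of $\alpha x_i^{e+2}\gamma$, $\alpha x_i^{e+1}\gamma$, $\alpha x_i^{e}\gamma$ play the roles of $L_-,L_0,L_+$ (e.g. the closure of $x_1^2\in\mathcal B_2$ has Jones polynomial $-s-s^5$). $\deg$ denotes the highest exponent of $s$. *)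

theory Defs
  imports "HOL-Computational_Algebra.Formal_Laurent_Series"
begin

text \<open>Laurent polynomials in the variable s are represented as int fls,
  with s = fls_X and s^(-1) = fls_X_inv.\<close>

abbreviation s_var :: "int fls" where "s_var \<equiv> fls_X"
abbreviation s_inv :: "int fls" where "s_inv \<equiv> fls_X_inv"

text \<open>Loop value of the Kauffman bracket, delta = -A^2 - A^(-2), with s = A^(-2).\<close>
definition tl_delta :: "int fls" where
  "tl_delta = - (s_var + s_inv)"

text \<open>Elements of the Temperley-Lieb algebra TL_3 over Z[s,s^(-1)], as coefficient
  vectors on the basis 0 = 1, 1 = e1, 2 = e2, 3 = e1 e2, 4 = e2 e1
  (coefficients at indices other than 0..4 are irrelevant/zero).\<close>
type_synonym tl3 = "nat \<Rightarrow> int fls"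

definition tl_one :: tl3 where
  "tl_one = (\<lambda>k. if k = 0 then 1 else 0)"

text \<open>Right multiplication by e1 and e2, using e_i^2 = delta e_i, e1 e2 e1 = e1, e2 e1 e2 = e2.\<close>
definition tl_mul_e1 :: "tl3 \<Rightarrow> tl3" where
  "tl_mul_e1 x = (\<lambda>k. if k = 1 then x 0 + tl_delta * x 1 + x 3
                       else if k = 4 then x 2 + tl_delta * x 4 else 0)"

definition tl_mul_e2 :: "tl3 \<Rightarrow> tl3" where
  "tl_mul_e2 x = (\<lambda>k. if k = 2 then x 0 + tl_delta * x 2 + x 4
                       else if k = 3 then x 1 + tl_delta * x 3 else 0)"

definition tl_mul_e :: "nat \<Rightarrow> tl3 \<Rightarrow> tl3" where
  "tl_mul_e i x = (if i = 1 then tl_mul_e1 x else tl_mul_e2 x)"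

text \<open>Braid letters: (i, True) is x_i, (i, False) is x_i^(-1), for i in {1,2}.
  Kauffman bracket: x_i maps to A + A^(-1) e_i and x_i^(-1) to A^(-1) + A e_i; the writhe
  normalisation (-A^3)^(-w) is absorbed letterwise, giving (with s = A^(-2))
  x_i maps to -s - s^2 e_i and x_i^(-1) maps to -s^(-1) - s^(-2) e_i.\<close>
definition tl_letter :: "nat \<times> bool \<Rightarrow> tl3 \<Rightarrow> tl3" where
  "tl_letter g x =
     (let i = fst g in
      if snd g then (\<lambda>k. - s_var * x k - s_var^2 * tl_mul_e i x k)
      else (\<lambda>k. - s_inv * x k - s_inv^2 * tl_mul_e i x k))"

definition tl_word :: "(nat \<times> bool) list \<Rightarrow> tl3" where
  "tl_word w = fold tl_letter w tl_one"

text \<open>Normalised closure trace: the closure of a basis diagram with c loops gets delta^(c-1)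
  (so the unknot has value 1): 1 has 3 loops, e1, e2 have 2, e1e2, e2e1 have 1.\<close>
definition tl_trace :: "tl3 \<Rightarrow> int fls" where
  "tl_trace x = tl_delta^2 * x 0 + tl_delta * (x 1 + x 2) + x 3 + x 4"

definition V3 :: "(nat \<times> bool) list \<Rightarrow> int fls" where
  "V3 w = tl_trace (tl_word w)"

definition lp_deg :: "int fls \<Rightarrow> int" where
  "lp_deg f = Max {n. fls_nth f n \<noteq> 0}"

definition lp_lead :: "int fls \<Rightarrow> int" where
  "lp_lead f = fls_nth f (lp_deg f)"

definition alt_braid :: "nat \<Rightarrow> (nat \<Rightarrow> nat) \<Rightarrow> (nat \<times> bool) list" where
  "alt_braid L a = concat (map (\<lambda>i. replicate (a i) (if odd i then 1 else 2, True)) [1..<2*L+1])"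

end

theory Submission
  imports Defs
begin

text \<open>
  In TL_3 we have x_i = -s (1 + s e_i), and since s \<delta> = -1 - s^2,
  x_i^n = (-s)^n (1 + c_n e_i) with c_1 = s, c_(n+1) = s - s^2 c_n; so c_n = s - s^3 + ... has
  degree 2n - 1 and top coefficient (-1)^(n-1). Hence V_3(\<beta>) = (-s)^D tr(P), where P is the
  product of the 2L factors 1 + c_(a_j) e_(i_j). Following the five basis coefficients of the
  partial products block by block, each block raises their degree bounds by 2 a_j - 1, which gives
  deg tr(P) \<le> 2D - 2L. If all a_j \<ge> 2, degree 2D - 2L is reached only through the word
  e_1 e_2 ... e_1 e_2 taking one e_i from every block, with coefficient (-1)^D. Finally all
  coefficients of P except that of 1 are divisible by s, so tr(P) has coefficient 1 at s^(-2);
  in particular V_3(\<beta>) \<noteq> 0, so its degree is defined.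
\<close>

unbundle fps_syntax

section \<open>Degree bounds for Laurent series\<close>

definition fls_deg_le :: "'a::zero fls \<Rightarrow> int \<Rightarrow> bool" where
  "fls_deg_le f n \<longleftrightarrow> (\<forall>k>n. f $$ k = 0)"

definition fls_subdeg_ge :: "'a::zero fls \<Rightarrow> int \<Rightarrow> bool" where
  "fls_subdeg_ge f n \<longleftrightarrow> (\<forall>k<n. f $$ k = 0)"

lemma fls_deg_le_nth: "fls_deg_le f n \<Longrightarrow> n < k \<Longrightarrow> f $$ k = 0"
  unfolding fls_deg_le_def by auto

lemma fls_subdeg_ge_nth: "fls_subdeg_ge f n \<Longrightarrow> k < n \<Longrightarrow> f $$ k = 0"
  unfolding fls_subdeg_ge_def by auto

lemma fls_deg_le_mono: "fls_deg_le f n \<Longrightarrow> n \<le> m \<Longrightarrow> fls_deg_le f m"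
  unfolding fls_deg_le_def by auto

lemma fls_subdeg_ge_mono: "fls_subdeg_ge f n \<Longrightarrow> m \<le> n \<Longrightarrow> fls_subdeg_ge f m"
  unfolding fls_subdeg_ge_def by auto

lemma fls_deg_le_0 [simp]: "fls_deg_le 0 n"
  and fls_subdeg_ge_0 [simp]: "fls_subdeg_ge 0 n"
  unfolding fls_deg_le_def fls_subdeg_ge_def by auto

lemma fls_deg_le_1: "fls_deg_le (1 :: 'a::zero_neq_one fls) 0"
  and fls_subdeg_ge_1: "fls_subdeg_ge (1 :: 'a::zero_neq_one fls) 0"
  unfolding fls_deg_le_def fls_subdeg_ge_def by auto

lemma fls_deg_le_X_power: "fls_deg_le (fls_X ^ n :: 'a::semiring_1 fls) n"
  and fls_subdeg_ge_X_power: "fls_subdeg_ge (fls_X ^ n :: 'a::semiring_1 fls) n"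
  unfolding fls_deg_le_def fls_subdeg_ge_def by auto

lemma fls_deg_le_add:
  fixes f g :: "'a::monoid_add fls"
  shows "fls_deg_le f n \<Longrightarrow> fls_deg_le g n \<Longrightarrow> fls_deg_le (f + g) n"
  unfolding fls_deg_le_def by auto

lemma fls_subdeg_ge_add:
  fixes f g :: "'a::monoid_add fls"
  shows "fls_subdeg_ge f n \<Longrightarrow> fls_subdeg_ge g n \<Longrightarrow> fls_subdeg_ge (f + g) n"
  unfolding fls_subdeg_ge_def by auto

lemma fls_deg_le_diff:
  fixes f g :: "'a::group_add fls"
  shows "fls_deg_le f n \<Longrightarrow> fls_deg_le g n \<Longrightarrow> fls_deg_le (f - g) n"
  unfolding fls_deg_le_def by auto

lemma fls_subdeg_ge_diff:
  fixes f g :: "'a::group_add fls"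
  shows "fls_subdeg_ge f n \<Longrightarrow> fls_subdeg_ge g n \<Longrightarrow> fls_subdeg_ge (f - g) n"
  unfolding fls_subdeg_ge_def by auto

lemma fls_nth_mult_single:
  fixes f g :: "'a::semiring_0 fls"
  assumes "\<And>i. i \<noteq> n \<Longrightarrow> f $$ i * g $$ (k - i) = 0"
  shows "(f * g) $$ k = f $$ n * g $$ (k - n)"
proof -
  have "(f * g) $$ k =
      (\<Sum>i=fls_subdegree f..k - fls_subdegree g. if i = n then f $$ n * g $$ (k - n) else 0)"
    unfolding fls_times_nth(2) by (rule sum.cong) (use assms in auto)
  also have "\<dots> = f $$ n * g $$ (k - n)"
    by (cases "n \<in> {fls_subdegree f..k - fls_subdegree g}") auto
  finally show ?thesis .
qed

lemma fls_deg_le_mult: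
  fixes f g :: "'a::semiring_0 fls"
  assumes "fls_deg_le f n" "fls_deg_le g m"
  shows "fls_deg_le (f * g) (n + m)" and "(f * g) $$ (n + m) = f $$ n * g $$ m"
proof -
  have "f $$ i * g $$ (k - i) = 0" if "k > n + m \<or> i \<noteq> n \<and> k = n + m" for i k
    using assms that unfolding fls_deg_le_def by (cases "i > n") auto
  then show "fls_deg_le (f * g) (n + m)" "(f * g) $$ (n + m) = f $$ n * g $$ m"
    unfolding fls_deg_le_def using fls_nth_mult_single[of n f g] by auto
qed

lemma fls_subdeg_ge_mult:
  fixes f g :: "'a::semiring_0 fls"
  assumes "fls_subdeg_ge f n" "fls_subdeg_ge g m"
  shows "fls_subdeg_ge (f * g) (n + m)" and "(f * g) $$ (n + m) = f $$ n * g $$ m"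
proof -
  have "f $$ i * g $$ (k - i) = 0" if "k < n + m \<or> i \<noteq> n \<and> k = n + m" for i k
    using assms that unfolding fls_subdeg_ge_def by (cases "i < n") auto
  then show "fls_subdeg_ge (f * g) (n + m)" "(f * g) $$ (n + m) = f $$ n * g $$ m"
    unfolding fls_subdeg_ge_def using fls_nth_mult_single[of n f g] by auto
qed

lemma fls_deg_le_multI:
  fixes f g :: "'a::semiring_0 fls"
  shows "fls_deg_le f n \<Longrightarrow> fls_deg_le g m \<Longrightarrow> n + m \<le> k \<Longrightarrow> fls_deg_le (f * g) k"
  using fls_deg_le_mult(1) fls_deg_le_mono by blast

lemma fls_subdeg_ge_multI:
  fixes f g :: "'a::semiring_0 fls"
  shows "fls_subdeg_ge f n \<Longrightarrow> fls_subdeg_ge g m \<Longrightarrow> k \<le> n + m \<Longrightarrow> fls_subdeg_ge (f * g) k"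
  using fls_subdeg_ge_mult(1) fls_subdeg_ge_mono by blast

lemma fls_nth_neg_X_power_mult:
  "((- fls_X) ^ n * f) $$ k = (-1) ^ n * f $$ (k - int n)" for f :: "'a::comm_ring_1 fls"
proof (induction n arbitrary: k)
  case (Suc n)
  have "(- fls_X) ^ Suc n * f = - (fls_X * ((- fls_X) ^ n * f))"
    by (simp add: mult.assoc)
  then have "((- fls_X) ^ Suc n * f) $$ k = - (((- fls_X) ^ n * f) $$ (k - 1))"
    by (simp only: fls_X_times_conv_shift(1)) simp
  then show ?case using Suc by (simp add: algebra_simps)
qed simp

lemma fls_deg_le_support:
  assumes "fls_deg_le f n"
  shows "{k. f $$ k \<noteq> 0} \<subseteq> {fls_subdegree f..n}" and "finite {k. f $$ k \<noteq> 0}"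
proof -
  show sub: "{k. f $$ k \<noteq> 0} \<subseteq> {fls_subdegree f..n}"
    using assms fls_subdegree_leI unfolding fls_deg_le_def by (auto simp: not_less[symmetric])
  show "finite {k. f $$ k \<noteq> 0}"
    using sub by (rule finite_subset) simp
qed

lemma lp_deg_le:
  assumes "f \<noteq> 0" "fls_deg_le f n"
  shows "lp_deg f \<le> n"
proof -
  obtain k where "f $$ k \<noteq> 0" using assms(1) by (auto simp: fls_eq_iff)
  then show ?thesis
    unfolding lp_deg_def using fls_deg_le_support[OF assms(2)] by (subst Max_le_iff) auto
qed

lemma lp_deg_eqI:
  assumes "fls_deg_le f n" "f $$ n \<noteq> 0"
  shows "lp_deg f = n"
  unfolding lp_deg_def using fls_deg_le_support[OF assms(1)] assms(2) by (intro Max_eqI) auto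

section \<open>Blocks of equal generators in TL_3\<close>

lemma fls_deg_le_tl_delta: "fls_deg_le tl_delta 1"
  and fls_subdeg_ge_tl_delta: "fls_subdeg_ge tl_delta (-1)"
  and tl_delta_nth_neg1: "tl_delta $$ (-1) = -1"
  unfolding fls_deg_le_def fls_subdeg_ge_def tl_delta_def by auto

lemma fls_deg_le_tl_delta_square: "fls_deg_le (tl_delta ^ 2) 2"
  using fls_deg_le_mult(1)[OF fls_deg_le_tl_delta fls_deg_le_tl_delta] by (simp add: power2_eq_square)

lemma s_var_mult_tl_delta: "s_var * tl_delta = - (s_var ^ 2) - 1"
proof -
  have "s_var * s_inv = 1" by (simp add: fls_X_inv_times_conv_shift)
  then show ?thesis unfolding tl_delta_def by (simp add: right_diff_distrib power2_eq_square)
qed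

primrec block_coeff :: "nat \<Rightarrow> int fls" where
  "block_coeff 0 = 0"
| "block_coeff (Suc n) = s_var - s_var ^ 2 * block_coeff n"

lemma block_coeff_subdeg_ge: "fls_subdeg_ge (block_coeff n) 1"
proof (induction n)
  case (Suc n)
  have "fls_subdeg_ge (s_var ^ 2 * block_coeff n) 1"
    using fls_subdeg_ge_multI[OF fls_subdeg_ge_X_power Suc] by simp
  then show ?case
    using fls_subdeg_ge_X_power[of 1] by (auto intro: fls_subdeg_ge_diff)
qed simp

lemma block_coeff_top:
  assumes "n \<ge> 1"
  shows "fls_deg_le (block_coeff n) (2 * int n - 1) \<and>
         block_coeff n $$ (2 * int n - 1) = - ((-1) ^ n)"
  using assms
proof (induction n rule: nat_induct_at_least)
  case base
  show ?case using fls_deg_le_X_power[of 1] by simp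
next
  case (Suc n)
  have top: "fls_deg_le (s_var ^ 2 * block_coeff n) (2 * int (Suc n) - 1)"
      "(s_var ^ 2 * block_coeff n) $$ (2 * int (Suc n) - 1) = - ((-1) ^ n)"
    using fls_deg_le_mult[OF fls_deg_le_X_power[of 2] conjunct1[OF Suc.IH]] Suc.IH
    by (simp_all add: algebra_simps)
  have "fls_deg_le s_var (2 * int (Suc n) - 1)"
    using fls_deg_le_X_power[of 1, simplified] by (rule fls_deg_le_mono) simp
  then show ?case using top Suc.hyps by (auto intro: fls_deg_le_diff)
qed

definition tl_block :: "nat \<Rightarrow> nat \<Rightarrow> tl3 \<Rightarrow> tl3" where
  "tl_block n i x = (\<lambda>k. x k + block_coeff n * tl_mul_e i x k)"

lemma tl_mul_e_scale: "tl_mul_e i (\<lambda>k. r * x k) = (\<lambda>k. r * tl_mul_e i x k)"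
  unfolding tl_mul_e_def tl_mul_e1_def tl_mul_e2_def by (auto simp: algebra_simps)

lemma tl_mul_e_add: "tl_mul_e i (\<lambda>k. x k + y k) = (\<lambda>k. tl_mul_e i x k + tl_mul_e i y k)"
  unfolding tl_mul_e_def tl_mul_e1_def tl_mul_e2_def by (auto simp: algebra_simps)

lemma tl_mul_e_idem: "tl_mul_e i (tl_mul_e i x) = (\<lambda>k. tl_delta * tl_mul_e i x k)"
  unfolding tl_mul_e_def tl_mul_e1_def tl_mul_e2_def by (auto simp: algebra_simps)

lemma tl_block_scale: "tl_block n i (\<lambda>k. r * x k) = (\<lambda>k. r * tl_block n i x k)"
  unfolding tl_block_def tl_mul_e_scale by (auto simp: algebra_simps)

lemma fold_tl_letter_replicate:
  "fold tl_letter (replicate n (i, True)) x = (\<lambda>k. (- s_var) ^ n * tl_block n i x k)"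
proof (induction n)
  case 0
  show ?case by (simp add: tl_block_def)
next
  case (Suc n)
  let ?c = "block_coeff n"
  have "fold tl_letter (replicate (Suc n) (i, True)) x =
      tl_letter (i, True) (\<lambda>k. (- s_var) ^ n * tl_block n i x k)"
    using Suc by (simp add: replicate_append_same[symmetric])
  also have "\<dots> = (\<lambda>k. (- s_var) ^ Suc n * tl_block (Suc n) i x k)"
  proof
    fix k
    let ?x = "x k" and ?e = "tl_mul_e i x k" and ?r = "(- s_var) ^ n"
    have ee: "tl_mul_e i (tl_block n i x) k = ?e + ?c * (tl_delta * ?e)"
      unfolding tl_block_def tl_mul_e_add tl_mul_e_scale tl_mul_e_idem by simp
    have "- X * (r * (y + c * e)) - X ^ 2 * (r * (e + c * (d * e))) =
        - X * r * (y + (X - X ^ 2 * c) * e)"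
      if "X * d = - (X ^ 2) - 1" for X d r y c e :: "int fls"
      using that by algebra
    note this[OF s_var_mult_tl_delta, of ?r ?x ?c ?e]
    then show "tl_letter (i, True) (\<lambda>k. ?r * tl_block n i x k) k
        = (- s_var) ^ Suc n * tl_block (Suc n) i x k"
      unfolding tl_letter_def tl_mul_e_scale by (simp add: ee[unfolded tl_block_def] tl_block_def)
  qed
  finally show ?case .
qed

primrec alt_block_product :: "(nat \<Rightarrow> nat) \<Rightarrow> nat \<Rightarrow> tl3" where
  "alt_block_product a 0 = tl_one"
| "alt_block_product a (Suc L) =
     tl_block (a (2 * L + 2)) 2 (tl_block (a (2 * L + 1)) 1 (alt_block_product a L))"

lemma alt_braid_Suc:
  "alt_braid (Suc L) a =
     alt_braid L a @ replicate (a (2 * L + 1)) (1, True) @ replicate (a (2 * L + 2)) (2, True)"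
proof -
  have "[1..<2 * Suc L + 1] = [1..<2 * L + 1] @ [2 * L + 1, 2 * L + 2]"
    by (simp add: upt_Suc_append)
  then show ?thesis unfolding alt_braid_def by simp
qed

lemma tl_word_alt_braid:
  "tl_word (alt_braid L a) = (\<lambda>k. (- s_var) ^ (\<Sum>i=1..2*L. a i) * alt_block_product a L k)"
proof (induction L)
  case 0
  show ?case by (simp add: tl_word_def alt_braid_def)
next
  case (Suc L)
  let ?D = "\<Sum>i=1..2*L. a i" and ?m = "a (2 * L + 1)" and ?n = "a (2 * L + 2)"
  have "(\<Sum>i=1..2 * Suc L. a i) = ?D + ?m + ?n"
    by (simp add: sum.cl_ivl_Suc)
  moreover have "tl_word (alt_braid (Suc L) a) =
      fold tl_letter (replicate ?n (2, True)) (fold tl_letter (replicate ?m (1, True))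
        (\<lambda>k. (- s_var) ^ ?D * alt_block_product a L k))"
    using Suc unfolding tl_word_def alt_braid_Suc by simp
  ultimately show ?case
    by (simp del: fold_replicate add: fold_tl_letter_replicate tl_block_scale)
      (simp add: power_add ac_simps)
qed

lemma V3_alt_braid:
  "V3 (alt_braid L a) = (- s_var) ^ (\<Sum>i=1..2*L. a i) * tl_trace (alt_block_product a L)"
  unfolding V3_def tl_word_alt_braid tl_trace_def by (simp add: algebra_simps)

lemma tl_block_1:
  "tl_block n 1 p 0 = p 0"
  "tl_block n 1 p 1 = p 1 + block_coeff n * (p 0 + tl_delta * p 1 + p 3)"
  "tl_block n 1 p 2 = p 2"
  "tl_block n 1 p 3 = p 3"
  "tl_block n 1 p 4 = p 4 + block_coeff n * (p 2 + tl_delta * p 4)"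
  unfolding tl_block_def tl_mul_e_def tl_mul_e1_def by simp_all

lemma tl_block_2:
  "tl_block n 2 p 0 = p 0"
  "tl_block n 2 p 1 = p 1"
  "tl_block n 2 p 2 = p 2 + block_coeff n * (p 0 + tl_delta * p 2 + p 4)"
  "tl_block n 2 p 3 = p 3 + block_coeff n * (p 1 + tl_delta * p 3)"
  "tl_block n 2 p 4 = p 4"
  unfolding tl_block_def tl_mul_e_def tl_mul_e2_def by simp_all

section \<open>Degree profiles of the partial products\<close>

definition tl_low_normal :: "tl3 \<Rightarrow> bool" where
  "tl_low_normal p \<longleftrightarrow> p 0 = 1 \<and> fls_subdeg_ge (p 1) 1 \<and> fls_subdeg_ge (p 2) 1 \<and>
     fls_subdeg_ge (p 3) 1 \<and> fls_subdeg_ge (p 4) 1"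

lemma tl_low_normal_block_1:
  assumes "tl_low_normal p"
  shows "tl_low_normal (tl_block n 1 p)"
proof -
  have p: "p 0 = 1" "fls_subdeg_ge (p 1) 1" "fls_subdeg_ge (p 2) 1" "fls_subdeg_ge (p 3) 1"
      "fls_subdeg_ge (p 4) 1"
    using assms unfolding tl_low_normal_def by auto
  have "fls_subdeg_ge (p 0 + tl_delta * p 1 + p 3) 0"
    using p fls_subdeg_ge_1 fls_subdeg_ge_multI[OF fls_subdeg_ge_tl_delta p(2)]
    by (auto intro!: fls_subdeg_ge_add elim: fls_subdeg_ge_mono)
  moreover have "fls_subdeg_ge (p 2 + tl_delta * p 4) 0"
    using p fls_subdeg_ge_multI[OF fls_subdeg_ge_tl_delta p(5)]
    by (auto intro!: fls_subdeg_ge_add elim: fls_subdeg_ge_mono)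
  ultimately show ?thesis
    unfolding tl_low_normal_def tl_block_1
    using p fls_subdeg_ge_multI[OF block_coeff_subdeg_ge] by (auto intro!: fls_subdeg_ge_add)
qed

lemma tl_low_normal_block_2:
  assumes "tl_low_normal p"
  shows "tl_low_normal (tl_block n 2 p)"
proof -
  have p: "p 0 = 1" "fls_subdeg_ge (p 1) 1" "fls_subdeg_ge (p 2) 1" "fls_subdeg_ge (p 3) 1"
      "fls_subdeg_ge (p 4) 1"
    using assms unfolding tl_low_normal_def by auto
  have "fls_subdeg_ge (p 0 + tl_delta * p 2 + p 4) 0"
    using p fls_subdeg_ge_1 fls_subdeg_ge_multI[OF fls_subdeg_ge_tl_delta p(3)]
    by (auto intro!: fls_subdeg_ge_add elim: fls_subdeg_ge_mono)
  moreover have "fls_subdeg_ge (p 1 + tl_delta * p 3) 0"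
    using p fls_subdeg_ge_multI[OF fls_subdeg_ge_tl_delta p(4)]
    by (auto intro!: fls_subdeg_ge_add elim: fls_subdeg_ge_mono)
  ultimately show ?thesis
    unfolding tl_low_normal_def tl_block_2
    using p fls_subdeg_ge_multI[OF block_coeff_subdeg_ge] by (auto intro!: fls_subdeg_ge_add)
qed

lemma tl_low_normal_alt_block_product: "tl_low_normal (alt_block_product a L)"
proof (induction L)
  case 0
  show ?case unfolding tl_low_normal_def by (simp add: tl_one_def)
next
  case (Suc L)
  show ?case using tl_low_normal_block_2[OF tl_low_normal_block_1[OF Suc]] by simp
qed

lemma tl_trace_nth_neg2:
  assumes "tl_low_normal p"
  shows "tl_trace p $$ (-2) = 1"
proof -
  have p: "p 0 = 1" "fls_subdeg_ge (p 1 + p 2) 1" "fls_subdeg_ge (p 3) 1" "fls_subdeg_ge (p 4) 1"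
    using assms unfolding tl_low_normal_def by (auto intro: fls_subdeg_ge_add)
  have "fls_subdeg_ge (tl_delta * (p 1 + p 2) + p 3 + p 4) (-1)"
    using fls_subdeg_ge_multI[OF fls_subdeg_ge_tl_delta p(2)] p
    by (auto intro!: fls_subdeg_ge_add elim: fls_subdeg_ge_mono)
  moreover have "(tl_delta ^ 2) $$ (-2) = 1"
    using fls_subdeg_ge_mult(2)[OF fls_subdeg_ge_tl_delta fls_subdeg_ge_tl_delta] tl_delta_nth_neg1
    by (simp add: power2_eq_square)
  moreover have "tl_trace p = tl_delta ^ 2 + (tl_delta * (p 1 + p 2) + p 3 + p 4)"
    unfolding tl_trace_def p(1) by (simp add: algebra_simps)
  ultimately show ?thesis using fls_subdeg_ge_nth by fastforce
qed

text \<open>Degree bounds, relative to S, satisfied by the partial products after a block of x_2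
  (resp. x_1); the lead profiles moreover record the coefficient e of the single basis element
  that reaches degree S.\<close>
definition deg_profile_x2 :: "int \<Rightarrow> tl3 \<Rightarrow> bool" where
  "deg_profile_x2 S p \<longleftrightarrow> p 0 = 1 \<and> 0 \<le> S \<and> fls_deg_le (p 1) (S - 1) \<and>
     fls_deg_le (p 2) (S - 1) \<and> fls_deg_le (p 3) S \<and> fls_deg_le (p 4) (S - 2)"

definition deg_profile_x1 :: "int \<Rightarrow> tl3 \<Rightarrow> bool" where
  "deg_profile_x1 S p \<longleftrightarrow> p 0 = 1 \<and> 1 \<le> S \<and> fls_deg_le (p 1) S \<and>
     fls_deg_le (p 2) (S - 2) \<and> fls_deg_le (p 3) (S - 1) \<and> fls_deg_le (p 4) (S - 1)"

definition lead_profile_x2 :: "int \<Rightarrow> int \<Rightarrow> tl3 \<Rightarrow> bool" where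
  "lead_profile_x2 S e p \<longleftrightarrow> p 0 = 1 \<and> 3 \<le> S \<and> fls_deg_le (p 1) (S - 2) \<and>
     fls_deg_le (p 2) (S - 2) \<and> fls_deg_le (p 3) S \<and> p 3 $$ S = e \<and>
     fls_deg_le (p 4) (S - 3)"

definition lead_profile_x1 :: "int \<Rightarrow> int \<Rightarrow> tl3 \<Rightarrow> bool" where
  "lead_profile_x1 S e p \<longleftrightarrow> p 0 = 1 \<and> 3 \<le> S \<and> fls_deg_le (p 1) S \<and>
     p 1 $$ S = e \<and> fls_deg_le (p 2) (S - 3) \<and> fls_deg_le (p 3) (S - 3) \<and>
     fls_deg_le (p 4) (S - 2)"

lemma deg_profile_block_1:
  assumes "deg_profile_x2 S p" "n \<ge> 1"
  shows "deg_profile_x1 (S + 2 * int n - 1) (tl_block n 1 p)"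
proof -
  have c: "fls_deg_le (block_coeff n) (2 * int n - 1)" using block_coeff_top assms(2) by auto
  have p: "p 0 = 1" "0 \<le> S" "fls_deg_le (p 1) (S - 1)" "fls_deg_le (p 2) (S - 1)"
      "fls_deg_le (p 3) S" "fls_deg_le (p 4) (S - 2)"
    using assms unfolding deg_profile_x2_def by auto
  have "fls_deg_le (p 0 + tl_delta * p 1 + p 3) S"
    using p fls_deg_le_multI[OF fls_deg_le_tl_delta p(3), of S] fls_deg_le_1
    by (auto intro!: fls_deg_le_add elim: fls_deg_le_mono)
  then have e1: "fls_deg_le (block_coeff n * (p 0 + tl_delta * p 1 + p 3)) (S + 2 * int n - 1)"
    by (rule fls_deg_le_multI[OF c]) simp
  have "fls_deg_le (p 2 + tl_delta * p 4) (S - 1)"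
    using p fls_deg_le_multI[OF fls_deg_le_tl_delta p(6), of "S - 1"]
    by (auto intro!: fls_deg_le_add elim: fls_deg_le_mono)
  then have e4: "fls_deg_le (block_coeff n * (p 2 + tl_delta * p 4)) (S + 2 * int n - 1 - 1)"
    by (rule fls_deg_le_multI[OF c]) simp
  show ?thesis
    unfolding deg_profile_x1_def tl_block_1 using assms e1 e4 p
    by (auto simp: deg_profile_x2_def intro!: fls_deg_le_add elim: fls_deg_le_mono)
qed

lemma deg_profile_block_2:
  assumes "deg_profile_x1 S p" "n \<ge> 1"
  shows "deg_profile_x2 (S + 2 * int n - 1) (tl_block n 2 p)"
proof -
  have c: "fls_deg_le (block_coeff n) (2 * int n - 1)" using block_coeff_top assms(2) by auto
  have p: "p 0 = 1" "1 \<le> S" "fls_deg_le (p 1) S" "fls_deg_le (p 2) (S - 2)"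
      "fls_deg_le (p 3) (S - 1)" "fls_deg_le (p 4) (S - 1)"
    using assms unfolding deg_profile_x1_def by auto
  have "fls_deg_le (p 0 + tl_delta * p 2 + p 4) (S - 1)"
    using p fls_deg_le_multI[OF fls_deg_le_tl_delta p(4), of "S - 1"] fls_deg_le_1
    by (auto intro!: fls_deg_le_add elim: fls_deg_le_mono)
  then have e2: "fls_deg_le (block_coeff n * (p 0 + tl_delta * p 2 + p 4)) (S + 2 * int n - 1 - 1)"
    by (rule fls_deg_le_multI[OF c]) simp
  have "fls_deg_le (p 1 + tl_delta * p 3) S"
    using p fls_deg_le_multI[OF fls_deg_le_tl_delta p(5), of S]
    by (auto intro!: fls_deg_le_add elim: fls_deg_le_mono)
  then have e3: "fls_deg_le (block_coeff n * (p 1 + tl_delta * p 3)) (S + 2 * int n - 1)"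
    by (rule fls_deg_le_multI[OF c]) simp
  show ?thesis
    unfolding deg_profile_x2_def tl_block_2 using assms e2 e3 p
    by (auto simp: deg_profile_x1_def intro!: fls_deg_le_add elim: fls_deg_le_mono)
qed

lemma lead_profile_block_1:
  assumes "lead_profile_x2 S e p" "n \<ge> 2"
  shows "lead_profile_x1 (S + 2 * int n - 1) (- ((-1) ^ n) * e) (tl_block n 1 p)"
proof -
  have c: "fls_deg_le (block_coeff n) (2 * int n - 1)"
      "block_coeff n $$ (2 * int n - 1) = - ((-1) ^ n)"
    using block_coeff_top assms(2) by auto
  have p: "p 0 = 1" "3 \<le> S" "fls_deg_le (p 1) (S - 2)" "fls_deg_le (p 2) (S - 2)"
      "fls_deg_le (p 3) S" "p 3 $$ S = e" "fls_deg_le (p 4) (S - 3)"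
    using assms unfolding lead_profile_x2_def by auto
  have low: "fls_deg_le (p 0 + tl_delta * p 1) (S - 1)"
    using p fls_deg_le_multI[OF fls_deg_le_tl_delta p(3), of "S - 1"] fls_deg_le_1
    by (auto intro!: fls_deg_le_add elim: fls_deg_le_mono)
  then have "fls_deg_le (p 0 + tl_delta * p 1 + p 3) S"
    by (rule fls_deg_le_add[OF fls_deg_le_mono p(5)]) simp
  moreover have "(p 0 + tl_delta * p 1 + p 3) $$ S = e"
    using fls_deg_le_nth[OF low, of S] p by simp
  ultimately have e1:
      "fls_deg_le (block_coeff n * (p 0 + tl_delta * p 1 + p 3)) (2 * int n - 1 + S)"
      "(block_coeff n * (p 0 + tl_delta * p 1 + p 3)) $$ (2 * int n - 1 + S) = - ((-1) ^ n) * e"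
    using fls_deg_le_mult[OF c(1)] c(2) by auto
  have "fls_deg_le (p 2 + tl_delta * p 4) (S - 2)"
    using p fls_deg_le_multI[OF fls_deg_le_tl_delta p(7), of "S - 2"]
    by (auto intro!: fls_deg_le_add elim: fls_deg_le_mono)
  then have e4: "fls_deg_le (block_coeff n * (p 2 + tl_delta * p 4)) (S + 2 * int n - 1 - 2)"
    by (rule fls_deg_le_multI[OF c(1)]) simp
  have "p 1 $$ (2 * int n - 1 + S) = 0"
    using fls_deg_le_nth[OF p(3)] assms(2) by simp
  moreover have idx: "S + 2 * int n - 1 = 2 * int n - 1 + S" by simp
  ultimately show ?thesis
    unfolding lead_profile_x1_def tl_block_1 idx
    using assms e1 e4 p
    by (auto simp: lead_profile_x2_def intro!: fls_deg_le_add elim: fls_deg_le_mono)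
qed

lemma lead_profile_block_2:
  assumes "lead_profile_x1 S e p" "n \<ge> 2"
  shows "lead_profile_x2 (S + 2 * int n - 1) (- ((-1) ^ n) * e) (tl_block n 2 p)"
proof -
  have c: "fls_deg_le (block_coeff n) (2 * int n - 1)"
      "block_coeff n $$ (2 * int n - 1) = - ((-1) ^ n)"
    using block_coeff_top assms(2) by auto
  have p: "p 0 = 1" "3 \<le> S" "fls_deg_le (p 1) S" "p 1 $$ S = e" "fls_deg_le (p 2) (S - 3)"
      "fls_deg_le (p 3) (S - 3)" "fls_deg_le (p 4) (S - 2)"
    using assms unfolding lead_profile_x1_def by auto
  have "fls_deg_le (p 0 + tl_delta * p 2 + p 4) (S - 2)"
    using p fls_deg_le_multI[OF fls_deg_le_tl_delta p(5), of "S - 2"] fls_deg_le_1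
    by (auto intro!: fls_deg_le_add elim: fls_deg_le_mono)
  then have e2:
      "fls_deg_le (block_coeff n * (p 0 + tl_delta * p 2 + p 4)) (S + 2 * int n - 1 - 2)"
    by (rule fls_deg_le_multI[OF c(1)]) simp
  have low: "fls_deg_le (tl_delta * p 3) (S - 2)"
    using fls_deg_le_multI[OF fls_deg_le_tl_delta p(6), of "S - 2"] by simp
  then have "fls_deg_le (p 1 + tl_delta * p 3) S"
    by (rule fls_deg_le_add[OF p(3) fls_deg_le_mono]) simp
  moreover have "(p 1 + tl_delta * p 3) $$ S = e"
    using fls_deg_le_nth[OF low, of S] p by simp
  ultimately have e3:
      "fls_deg_le (block_coeff n * (p 1 + tl_delta * p 3)) (2 * int n - 1 + S)"
      "(block_coeff n * (p 1 + tl_delta * p 3)) $$ (2 * int n - 1 + S) = - ((-1) ^ n) * e"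
    using fls_deg_le_mult[OF c(1)] c(2) by auto
  have "p 3 $$ (2 * int n - 1 + S) = 0"
    using fls_deg_le_nth[OF p(6)] assms(2) by simp
  moreover have idx: "S + 2 * int n - 1 = 2 * int n - 1 + S" by simp
  ultimately show ?thesis
    unfolding lead_profile_x2_def tl_block_2 idx
    using assms e2 e3 p
    by (auto simp: lead_profile_x1_def intro!: fls_deg_le_add elim: fls_deg_le_mono)
qed

lemma deg_profile_x2_tl_one: "deg_profile_x2 0 tl_one"
  unfolding deg_profile_x2_def by (simp add: tl_one_def)

lemma lead_profile_x1_first_block:
  assumes "n \<ge> 2"
  shows "lead_profile_x1 (2 * int n - 1) (- ((-1) ^ n)) (tl_block n 1 tl_one)"
  using block_coeff_top[of n] assms
  unfolding lead_profile_x1_def tl_block_1 by (simp add: tl_one_def)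

lemma deg_profile_alt_block_product:
  assumes "\<forall>i\<in>{1..2*L}. a i \<ge> 1"
  shows "deg_profile_x2 (2 * int (\<Sum>i=1..2*L. a i) - 2 * int L) (alt_block_product a L)"
  using assms
proof (induction L)
  case 0
  show ?case using deg_profile_x2_tl_one by simp
next
  case (Suc L)
  have a: "\<forall>i\<in>{1..2*L}. a i \<ge> 1" "a (2 * L + 1) \<ge> 1" "a (2 * L + 2) \<ge> 1"
    using Suc.prems by auto
  have "(\<Sum>i=1..2 * Suc L. a i) = (\<Sum>i=1..2*L. a i) + a (2 * L + 1) + a (2 * L + 2)"
    by (simp add: sum.cl_ivl_Suc)
  then show ?case
    using deg_profile_block_2[OF deg_profile_block_1[OF Suc.IH[OF a(1)] a(2)] a(3)]
    by (simp add: algebra_simps)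
qed

lemma lead_profile_alt_block_product:
  assumes "L \<ge> 1" "\<forall>i\<in>{1..2*L}. a i \<ge> 2"
  shows "lead_profile_x2 (2 * int (\<Sum>i=1..2*L. a i) - 2 * int L) ((-1) ^ (\<Sum>i=1..2*L. a i))
           (alt_block_product a L)"
  using assms
proof (induction L rule: nat_induct_at_least)
  case base
  have "lead_profile_x2 (2 * int (a 1) - 1 + 2 * int (a 2) - 1) (- ((-1) ^ a 2) * - ((-1) ^ a 1))
      (tl_block (a 2) 2 (tl_block (a 1) 1 tl_one))"
    using base by (intro lead_profile_block_2 lead_profile_x1_first_block) auto
  moreover have "{1..2 * (1::nat)} = {1, 2}"
    by auto
  ultimately show ?case
    by (simp add: algebra_simps power_add numeral_2_eq_2)
next
  case (Suc L)
  have a: "\<forall>i\<in>{1..2*L}. a i \<ge> 2" "a (2 * L + 1) \<ge> 2" "a (2 * L + 2) \<ge> 2"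
    using Suc.prems by auto
  have "(\<Sum>i=1..2 * Suc L. a i) = (\<Sum>i=1..2*L. a i) + a (2 * L + 1) + a (2 * L + 2)"
    by (simp add: sum.cl_ivl_Suc)
  then show ?case
    using lead_profile_block_2[OF lead_profile_block_1[OF Suc.IH[OF a(1)] a(2)] a(3)]
    by (simp add: algebra_simps power_add)
qed

lemma tl_trace_deg_le:
  assumes "deg_profile_x2 S p" "2 \<le> S"
  shows "fls_deg_le (tl_trace p) S"
proof -
  have p: "p 0 = 1" "fls_deg_le (p 1 + p 2) (S - 1)" "fls_deg_le (p 3) S" "fls_deg_le (p 4) (S - 2)"
    using assms unfolding deg_profile_x2_def by (auto intro: fls_deg_le_add)
  note fls_deg_le_tl_delta_square
  moreover have "fls_deg_le (tl_delta * (p 1 + p 2)) S"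
    using fls_deg_le_multI[OF fls_deg_le_tl_delta p(2)] by simp
  moreover have "tl_trace p = tl_delta ^ 2 + tl_delta * (p 1 + p 2) + p 3 + p 4"
    unfolding tl_trace_def p(1) by (simp add: algebra_simps)
  ultimately show ?thesis
    using p assms(2) by (auto intro!: fls_deg_le_add elim: fls_deg_le_mono)
qed

lemma tl_trace_lead:
  assumes "lead_profile_x2 S e p"
  shows "fls_deg_le (tl_trace p) S" and "tl_trace p $$ S = e"
proof -
  have p: "p 0 = 1" "3 \<le> S" "fls_deg_le (p 1 + p 2) (S - 2)" "fls_deg_le (p 3) S" "p 3 $$ S = e"
      "fls_deg_le (p 4) (S - 3)"
    using assms unfolding lead_profile_x2_def by (auto intro: fls_deg_le_add)
  note fls_deg_le_tl_delta_square
  moreover have "fls_deg_le (tl_delta * (p 1 + p 2)) (S - 1)"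
    using fls_deg_le_multI[OF fls_deg_le_tl_delta p(3)] by simp
  ultimately have rest: "fls_deg_le (tl_delta ^ 2 + tl_delta * (p 1 + p 2) + p 4) (S - 1)"
    using p by (auto intro!: fls_deg_le_add elim: fls_deg_le_mono)
  have tr: "tl_trace p = (tl_delta ^ 2 + tl_delta * (p 1 + p 2) + p 4) + p 3"
    unfolding tl_trace_def p(1) by (simp add: algebra_simps)
  show "fls_deg_le (tl_trace p) S"
    unfolding tr by (rule fls_deg_le_add[OF fls_deg_le_mono[OF rest] p(4)]) simp
  show "tl_trace p $$ S = e"
    unfolding tr using fls_deg_le_nth[OF rest, of S] p(5) by simp
qed

lemma V3_alt_braid_nth:
  "V3 (alt_braid L a) $$ k =
     (-1) ^ (\<Sum>i=1..2*L. a i) * tl_trace (alt_block_product a L) $$ (k - int (\<Sum>i=1..2*L. a i))"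
  unfolding V3_alt_braid fls_nth_neg_X_power_mult ..

lemma V3_alt_braid_deg_le:
  assumes "fls_deg_le (tl_trace (alt_block_product a L)) S"
  shows "fls_deg_le (V3 (alt_braid L a)) (int (\<Sum>i=1..2*L. a i) + S)"
  using assms unfolding fls_deg_le_def V3_alt_braid_nth by simp

lemma V3_alt_braid_nonzero: "V3 (alt_braid L a) \<noteq> 0"
proof -
  let ?D = "\<Sum>i=1..2*L. a i"
  have "V3 (alt_braid L a) $$ (int ?D - 2) = (-1) ^ ?D"
    unfolding V3_alt_braid_nth using tl_trace_nth_neg2[OF tl_low_normal_alt_block_product] by simp
  then show ?thesis by (intro fls_nonzeroI[of _ "int ?D - 2"]) simp
qed

lemma lp_deg_V3_alt_braid_le:
  assumes "L \<ge> 1" "\<forall>i\<in>{1..2*L}. a i \<ge> 1"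
  shows "lp_deg (V3 (alt_braid L a)) \<le> 3 * int (\<Sum>i=1..2*L. a i) - 2 * int L"
proof -
  let ?D = "\<Sum>i=1..2*L. a i"
  have "2 * L \<le> ?D"
    using sum_mono[of "{1..2*L}" "\<lambda>_. 1" a] assms(2) by simp
  then have "2 \<le> 2 * int ?D - 2 * int L"
    using assms(1) by linarith
  then have "fls_deg_le (tl_trace (alt_block_product a L)) (2 * int ?D - 2 * int L)"
    by (rule tl_trace_deg_le[OF deg_profile_alt_block_product[OF assms(2)]])
  then have "fls_deg_le (V3 (alt_braid L a)) (int ?D + (2 * int ?D - 2 * int L))"
    by (rule V3_alt_braid_deg_le)
  then have "lp_deg (V3 (alt_braid L a)) \<le> int ?D + (2 * int ?D - 2 * int L)"
    by (rule lp_deg_le[OF V3_alt_braid_nonzero])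
  then show ?thesis by simp
qed

lemma lp_deg_V3_alt_braid_eq:
  assumes "L \<ge> 1" "\<forall>i\<in>{1..2*L}. a i \<ge> 2"
  shows "lp_deg (V3 (alt_braid L a)) = 3 * int (\<Sum>i=1..2*L. a i) - 2 * int L"
    and "lp_lead (V3 (alt_braid L a)) = 1"
proof -
  let ?D = "\<Sum>i=1..2*L. a i" and ?S = "2 * int (\<Sum>i=1..2*L. a i) - 2 * int L"
  have P: "lead_profile_x2 ?S ((-1) ^ ?D) (alt_block_product a L)"
    using lead_profile_alt_block_product[OF assms] .
  have "V3 (alt_braid L a) $$ (int ?D + ?S) = 1"
    unfolding V3_alt_braid_nth using tl_trace_lead(2)[OF P] by (simp flip: power_add)
  moreover have "lp_deg (V3 (alt_braid L a)) = int ?D + ?S"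
    using calculation by (intro lp_deg_eqI V3_alt_braid_deg_le tl_trace_lead(1)[OF P]) auto
  ultimately show "lp_deg (V3 (alt_braid L a)) = 3 * int ?D - 2 * int L"
    and "lp_lead (V3 (alt_braid L a)) = 1"
    unfolding lp_lead_def by simp_all
qed

theorem theorem1p6:
  fixes L :: nat and a :: "nat \<Rightarrow> nat"
  assumes "L \<ge> 1"
  shows "((\<forall>i\<in>{1..2*L}. a i \<ge> 1) \<longrightarrow>
            lp_deg (V3 (alt_braid L a)) \<le> 3 * (\<Sum>i=1..2*L. int (a i)) - 2 * int L)
       \<and> ((\<forall>i\<in>{1..2*L}. a i \<ge> 2) \<and> L \<le> 4 \<longrightarrow>
            lp_deg (V3 (alt_braid L a)) = 3 * (\<Sum>i=1..2*L. int (a i)) - 2 * int L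
          \<and> lp_lead (V3 (alt_braid L a)) = 1)"
  using lp_deg_V3_alt_braid_le[OF assms] lp_deg_V3_alt_braid_eq[OF assms]
  by (simp add: of_nat_sum)

end
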